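(* For any sheaf $\mathcal F$ of finite-dimensional $\mathbb F$-vector spaces on a digraph $G$, $h_1^{\rm twist}(\mathcal F)\ge{\rm m.e.}(\mathcal F)$.
   Context: A digraph has finite vertex and edge sets with tail/head maps $t_G,h_G$. A sheaf $\mathcal F$ on $G$: finite-dimensional vector spaces $\mathcal F(P)$, $P\in V_G\sqcup E_G$, linear maps $\mathcal F(t,e)\colon\mathcal F(e)\to\mathcal F(t_Ge)$, $\mathcal F(h,e)\colon\mathcal F(e)\to\mathcal F(h_Ge)$; $\mathcal F(V)=\bigoplus_v\mathcal F(v)$, $\mathcal F(E)=\bigoplus_e\mathcal F(e)$; $d_h,d_t\colon\mathcal F(E)\to\mathcal F(V)$ send the summand $\mathcal F(e)$ into $\mathcal F(h_Ge)$ resp. $\mathcal F(t_Ge)$ via the restriction maps, $d=d_h-d_t$, $H_1=\ker d$. Twisting: with independent indeterminates $\psi(e)$, $e\in E_G$, $\mathcal F^\psi$ is the sheaf of $\mathbb F(\psi)$-vector spaces with values $\mathcal F(P)\otimes_{\mathbb F}\mathbb F(\psi)$, head maps $\mathcal F(h,e)$, tail maps $\psi(e)\mathcal F(t,e)$; $h_1^{\rm twist}(\mathcal F)=\dim_{\mathbb F(\psi)}H_1(\mathcal F^\psi)$. For $U\subset\mathcal F(V)$, $\Gamma_{\rm ht}(U)=\bigoplus_e\{w\in\mathcal F(e):d_hw\in U,d_tw\in U\}$, ${\rm excess}(\mathcal F,U)=\dim\Gamma_{\rm ht}(U)-\dim U$, ${\rm m.e.}(\mathcal F)=\max_U{\rm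 excess}(\mathcal F,U)$. *)

theory Defs
  imports Main "HOL.Vector_Spaces" "HOL-Library.Poly_Mapping" "HOL-Library.Function_Algebras"
    "HOL-Computational_Algebra.Fraction_Field"
begin

text \<open>Coordinates: a sheaf of finite-dimensional vector spaces over a field 'a on a digraph
  (V, E, tailG, headG) is given by dimensions nV v = dim F(v), nE e = dim F(e), and the restriction
  maps as coefficient arrays: RH e i j is the (i,j) entry of F(h,e) : 'a^(nE e) -> 'a^(nV (headG e))
  and RT e i j is the (i,j) entry of F(t,e) : 'a^(nE e) -> 'a^(nV (tailG e)).
  F(V) is realised as functions on pairs (v,i), v in V, i < nV v (zero elsewhere);
  F(E) likewise on pairs (e,j). Everything is generic in the scalar ring 'k so that the
  same definitions serve for 'a and for the rational function field 'a(psi).\<close>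

definition fscale :: "'k::times \<Rightarrow> ('x \<Rightarrow> 'k) \<Rightarrow> ('x \<Rightarrow> 'k)" where
  "fscale c f = (\<lambda>x. c * f x)"

definition FV :: "'v set \<Rightarrow> ('v \<Rightarrow> nat) \<Rightarrow> ('v \<times> nat \<Rightarrow> 'k::zero) set" where
  "FV V nV = {x. \<forall>v i. \<not> (v \<in> V \<and> i < nV v) \<longrightarrow> x (v, i) = 0}"

definition FE :: "'e set \<Rightarrow> ('e \<Rightarrow> nat) \<Rightarrow> ('e \<times> nat \<Rightarrow> 'k::zero) set" where
  "FE E nE = {w. \<forall>e j. \<not> (e \<in> E \<and> j < nE e) \<longrightarrow> w (e, j) = 0}"

text \<open>The map F(E) -> F(V) sending summand F(e) into F(end e) via coefficients R
  (used for d_h with end = headG, and for d_t with end = tailG).\<close>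
definition dmap :: "'e set \<Rightarrow> ('e \<Rightarrow> 'v) \<Rightarrow> ('v \<Rightarrow> nat) \<Rightarrow> ('e \<Rightarrow> nat)
    \<Rightarrow> ('e \<Rightarrow> nat \<Rightarrow> nat \<Rightarrow> 'k::comm_ring) \<Rightarrow> ('e \<times> nat \<Rightarrow> 'k) \<Rightarrow> ('v \<times> nat \<Rightarrow> 'k)" where
  "dmap E endp nV nE R w = (\<lambda>(v, i). if i < nV v then
      (\<Sum>e\<in>{e\<in>E. endp e = v}. \<Sum>j<nE e. R e i j * w (e, j)) else 0)"

definition ecomp :: "'e \<Rightarrow> ('e \<times> nat \<Rightarrow> 'k::zero) \<Rightarrow> ('e \<times> nat \<Rightarrow> 'k)" where
  "ecomp e w = (\<lambda>(e', j). if e' = e then w (e', j) else 0)"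

definition H1 :: "'v set \<Rightarrow> 'e set \<Rightarrow> ('e \<Rightarrow> 'v) \<Rightarrow> ('e \<Rightarrow> 'v) \<Rightarrow> ('v \<Rightarrow> nat) \<Rightarrow> ('e \<Rightarrow> nat)
    \<Rightarrow> ('e \<Rightarrow> nat \<Rightarrow> nat \<Rightarrow> 'k::comm_ring) \<Rightarrow> ('e \<Rightarrow> nat \<Rightarrow> nat \<Rightarrow> 'k)
    \<Rightarrow> ('e \<times> nat \<Rightarrow> 'k) set" where
  "H1 V E tailG headG nV nE RT RH =
     {w \<in> FE E nE. dmap E headG nV nE RH w - dmap E tailG nV nE RT w = 0}"

text \<open>Polynomial ring 'a[psi(e) : e] and its fraction field 'a(psi).\<close>
type_synonym ('e, 'a) psi_field = "(('e \<Rightarrow>\<^sub>0 nat) \<Rightarrow>\<^sub>0 'a) fract"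

definition const_psi :: "'a::field \<Rightarrow> ('e::linorder, 'a) psi_field" where
  "const_psi c = Fract (Poly_Mapping.single 0 c) 1"

definition psi :: "'e::linorder \<Rightarrow> ('e, 'a::field) psi_field" where
  "psi e = Fract (Poly_Mapping.single (Poly_Mapping.single e 1) 1) 1"

text \<open>Twisted sheaf: head maps F(h,e), tail maps psi(e) F(t,e), tensored up to 'a(psi).\<close>
definition h1_twist :: "'v set \<Rightarrow> 'e::linorder set \<Rightarrow> ('e \<Rightarrow> 'v) \<Rightarrow> ('e \<Rightarrow> 'v) \<Rightarrow> ('v \<Rightarrow> nat)
    \<Rightarrow> ('e \<Rightarrow> nat) \<Rightarrow> ('e \<Rightarrow> nat \<Rightarrow> nat \<Rightarrow> 'a::field) \<Rightarrow> ('e \<Rightarrow> nat \<Rightarrow> nat \<Rightarrow> 'a) \<Rightarrow> nat" where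
  "h1_twist V E tailG headG nV nE RT RH =
     vector_space.dim (fscale :: ('e, 'a) psi_field \<Rightarrow> _)
       (H1 V E tailG headG nV nE (\<lambda>e i j. psi e * const_psi (RT e i j)) (\<lambda>e i j. const_psi (RH e i j)))"

definition Gamma_ht :: "'v set \<Rightarrow> 'e set \<Rightarrow> ('e \<Rightarrow> 'v) \<Rightarrow> ('e \<Rightarrow> 'v) \<Rightarrow> ('v \<Rightarrow> nat) \<Rightarrow> ('e \<Rightarrow> nat)
    \<Rightarrow> ('e \<Rightarrow> nat \<Rightarrow> nat \<Rightarrow> 'a::field) \<Rightarrow> ('e \<Rightarrow> nat \<Rightarrow> nat \<Rightarrow> 'a)
    \<Rightarrow> ('v \<times> nat \<Rightarrow> 'a) set \<Rightarrow> ('e \<times> nat \<Rightarrow> 'a) set" where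
  "Gamma_ht V E tailG headG nV nE RT RH U =
     {w \<in> FE E nE. \<forall>e\<in>E. dmap E headG nV nE RH (ecomp e w) \<in> U \<and> dmap E tailG nV nE RT (ecomp e w) \<in> U}"

definition excess :: "'v set \<Rightarrow> 'e set \<Rightarrow> ('e \<Rightarrow> 'v) \<Rightarrow> ('e \<Rightarrow> 'v) \<Rightarrow> ('v \<Rightarrow> nat) \<Rightarrow> ('e \<Rightarrow> nat)
    \<Rightarrow> ('e \<Rightarrow> nat \<Rightarrow> nat \<Rightarrow> 'a::field) \<Rightarrow> ('e \<Rightarrow> nat \<Rightarrow> nat \<Rightarrow> 'a)
    \<Rightarrow> ('v \<times> nat \<Rightarrow> 'a) set \<Rightarrow> int" where
  "excess V E tailG headG nV nE RT RH U =
     int (vector_space.dim (fscale :: 'a \<Rightarrow> _) (Gamma_ht V E tailG headG nV nE RT RH U))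
     - int (vector_space.dim (fscale :: 'a \<Rightarrow> _) U)"

definition max_excess :: "'v set \<Rightarrow> 'e set \<Rightarrow> ('e \<Rightarrow> 'v) \<Rightarrow> ('e \<Rightarrow> 'v) \<Rightarrow> ('v \<Rightarrow> nat) \<Rightarrow> ('e \<Rightarrow> nat)
    \<Rightarrow> ('e \<Rightarrow> nat \<Rightarrow> nat \<Rightarrow> 'a::field) \<Rightarrow> ('e \<Rightarrow> nat \<Rightarrow> nat \<Rightarrow> 'a) \<Rightarrow> int" where
  "max_excess V E tailG headG nV nE RT RH =
     Max {excess V E tailG headG nV nE RT RH U | U.
            module.subspace (fscale :: 'a \<Rightarrow> _) U \<and> U \<subseteq> FV V nV}"

end

theory Submission
  imports Defs
begin

(*
  For every subspace U of F(V), m.e. is bounded by h_1^twist via a rank-nullity count over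
  the field K = F(psi).  Let Gamma = Gamma_ht(U) and let W be the K-span of Gamma inside
  F(E) (x) K.  Extension of scalars preserves dimensions, so dim_K W = dim Gamma.  The twisted
  differential d^psi = d_h - psi d_t maps each element of Gamma into the K-span of U, because
  on the summand F(e) it equals the restriction of d_h minus psi(e) times that of d_t, and
  both land in U.  Hence
      dim Gamma = dim_K W <= dim_K (ker d^psi restricted to W) + dim_K d^psi(W)
                           <= h_1^twist + dim U.
*)

lemma sum_fun_apply: "(sum f A) x = (\<Sum>a\<in>A. f a x)"
  by (induct A rule: infinite_finite_induct) auto

lemma fscale_apply [simp]: "fscale c f x = c * f x"
  by (simp add: fscale_def)

lemma vector_space_fscale: "vector_space (fscale :: 'k::field \<Rightarrow> ('x \<Rightarrow> 'k) \<Rightarrow> _)"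
  by unfold_locales (auto simp: fscale_def fun_eq_iff algebra_simps)

lemma finite_support_span:
  assumes "finite P"
  shows "{w::'x \<Rightarrow> 'k::field. \<forall>x. x \<notin> P \<longrightarrow> w x = 0}
     \<subseteq> module.span fscale ((\<lambda>p x. if x = p then 1 else 0) ` P)"
proof
  interpret vector_space "fscale :: 'k \<Rightarrow> ('x \<Rightarrow> 'k) \<Rightarrow> _" by (rule vector_space_fscale)
  fix w :: "'x \<Rightarrow> 'k" assume w: "w \<in> {w. \<forall>x. x \<notin> P \<longrightarrow> w x = 0}"
  have "w = (\<Sum>p\<in>P. fscale (w p) (\<lambda>x. if x = p then 1 else 0))"
    using w assms by (auto simp: fun_eq_iff sum_fun_apply if_distrib cong: if_cong)
  also have "\<dots> \<in> span ((\<lambda>p x. if x = p then 1 else 0) ` P)"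
    by (intro span_sum span_scale span_base) auto
  finally show "w \<in> span ((\<lambda>p x. if x = p then 1 else 0) ` P)" .
qed

lemma FE_finite_dim:
  assumes "finite E"
  shows "\<exists>P. finite P \<and> FE E nE \<subseteq> module.span (fscale :: 'k::field \<Rightarrow> _) P"
  using finite_support_span[of "Sigma E (\<lambda>e. {..<nE e})"] assms
  by (intro exI[of _ "(\<lambda>p x. if x = p then 1 else 0) ` Sigma E (\<lambda>e. {..<nE e})"])
     (auto simp: FE_def)

lemma FV_finite_dim:
  assumes "finite V"
  shows "\<exists>P. finite P \<and> FV V nV \<subseteq> module.span (fscale :: 'k::field \<Rightarrow> _) P"
  using finite_support_span[of "Sigma V (\<lambda>v. {..<nV v})"] assms
  by (intro exI[of _ "(\<lambda>p x. if x = p then 1 else 0) ` Sigma V (\<lambda>v. {..<nV v})"])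
     (auto simp: FV_def)

(* Monotonicity of dimension; the library version needs a finite-dimensional ambient space,
   here it suffices that the larger space is finite-dimensional. *)
lemma (in vector_space) dim_mono_finite_dim:
  assumes "finite P" "T \<subseteq> span P" "S \<subseteq> span T"
  shows "dim S \<le> dim T"
proof -
  obtain B where B: "B \<subseteq> T" "independent B" "T \<subseteq> span B" "card B = dim T"
    using basis_exists by blast
  have "finite B"
    using independent_span_bound[OF assms(1) B(2)] B(1) assms(2) by blast
  moreover have "S \<subseteq> span B"
    using assms(3) B(3) span_mono[OF B(3)] by (auto simp: span_span)
  ultimately show ?thesis
    using dim_le_card B(4) by metis
qed

(* Rank-nullity inequality for a linear map on a finite-dimensional subspace S:
   S is spanned by a basis of the kernel together with preimages of a basis of the image. *)
lemma (in vector_space_pair) dim_le_kernel_plus_image: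
  assumes f: "Vector_Spaces.linear s1 s2 f" and S: "vs1.subspace S" and P: "finite P" "S \<subseteq> vs1.span P"
  shows "vs1.dim S \<le> vs1.dim {x\<in>S. f x = 0} + vs2.dim (f ` S)"
proof -
  let ?K = "{x\<in>S. f x = 0}"
  obtain N where N: "N \<subseteq> ?K" "vs1.independent N" "?K \<subseteq> vs1.span N" "card N = vs1.dim ?K"
    using vs1.basis_exists by blast
  have finN: "finite N"
    using vs1.independent_span_bound[OF P(1) N(2)] N(1) P(2) by blast
  obtain C where C: "C \<subseteq> f ` S" "vs2.independent C" "f ` S \<subseteq> vs2.span C" "card C = vs2.dim (f ` S)"
    using vs2.basis_exists by blast
  have "f ` S \<subseteq> vs2.span (f ` P)"
    using P(2) linear_span_image[OF f, of P] by auto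
  then have finC: "finite C"
    using vs2.independent_span_bound[OF finite_imageI[OF P(1)] C(2)] C(1) by blast
  define g where "g = inv_into S f"
  have g: "g c \<in> S" "f (g c) = c" if "c \<in> C" for c
    using that C(1) by (auto simp: g_def inv_into_into f_inv_into_f)
  have "S \<subseteq> vs1.span (N \<union> g ` C)"
  proof
    fix x assume x: "x \<in> S"
    then obtain a where a: "f x = (\<Sum>c\<in>C. a c *b c)"
      using C(3) vs2.span_finite[OF finC] by blast
    define y where "y = (\<Sum>c\<in>C. a c *a g c)"
    have y: "y \<in> S" "y \<in> vs1.span (g ` C)"
      unfolding y_def using g(1)
      by (auto intro!: vs1.subspace_sum[OF S] vs1.subspace_scale[OF S]
          vs1.span_sum vs1.span_scale vs1.span_base[OF imageI])
    have "f y = f x"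
      using g by (simp add: a y_def linear_sum[OF f] linear_scale[OF f])
    then have "x - y \<in> ?K"
      using x y(1) S by (simp add: linear_diff[OF f] vs1.subspace_diff)
    then have "x - y \<in> vs1.span (N \<union> g ` C)"
      using N(3) vs1.span_mono[of N "N \<union> g ` C"] by auto
    moreover have "y \<in> vs1.span (N \<union> g ` C)"
      using y(2) vs1.span_mono[of "g ` C" "N \<union> g ` C"] by auto
    ultimately show "x \<in> vs1.span (N \<union> g ` C)"
      using vs1.span_add by fastforce
  qed
  then have "vs1.dim S \<le> card (N \<union> g ` C)"
    using vs1.dim_le_card finN finC by blast
  also have "\<dots> \<le> card N + card C"
    using card_Un_le card_image_le[OF finC, of g] by (meson add_left_mono order_trans)
  finally show ?thesis
    using N(4) C(4) by simp
qed

lemma vector_space_mult: "vector_space ((*) :: 'k::field \<Rightarrow> 'k \<Rightarrow> 'k)"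
  by unfold_locales (auto simp: algebra_simps)

(* A ring homomorphism between fields; used for the inclusion of 'a into 'a(psi).
   Composition with emb is extension of scalars on spaces of functions. *)
locale field_embedding =
  fixes emb :: "'a::field \<Rightarrow> 'k::field"
  assumes emb_add: "emb (a + b) = emb a + emb b"
    and emb_mult: "emb (a * b) = emb a * emb b"
    and emb_1: "emb 1 = 1"
begin

lemma emb_0 [simp]: "emb 0 = 0"
  using emb_add[of 0 0] by (metis add.right_neutral add_left_cancel)

lemma emb_sum: "emb (sum f A) = (\<Sum>x\<in>A. emb (f x))"
  by (induct A rule: infinite_finite_induct) (auto simp: emb_add)

lemma emb_eq_0_iff [simp]: "emb a = 0 \<longleftrightarrow> a = 0"
proof
  assume "emb a = 0"
  then have "emb (a * inverse a) = 0" by (simp add: emb_mult)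
  then show "a = 0" using emb_1 by (cases "a = 0") auto
qed simp

lemma inj_emb: "inj emb"
proof (rule injI)
  fix a b assume "emb a = emb b"
  then have "emb (a - b) = 0" using emb_add[of "a - b" b] by simp
  then show "a = b" by simp
qed

lemma vector_space_restrict_scalars: "vector_space (\<lambda>r (k::'k). emb r * k)"
  by unfold_locales (auto simp: algebra_simps emb_add emb_mult emb_1)

lemma emb_comp_lincomb:
  "emb \<circ> (\<Sum>c\<in>C. fscale (a c) c) = (\<Sum>c\<in>C. fscale (emb (a c)) (emb \<circ> c))"
  by (auto simp: fun_eq_iff sum_fun_apply emb_sum emb_mult)

(* Extension of scalars preserves linear independence: an 'a-linear functional on 'k
   turns a K-linear relation among the extended vectors into an 'a-linear one. *)
lemma independent_base_change:
  fixes B :: "('x \<Rightarrow> 'a) set"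
  assumes indep: "module.independent (fscale :: 'a \<Rightarrow> _) B" and fin: "finite B"
  shows "module.independent (fscale :: 'k \<Rightarrow> _) ((\<circ>) emb ` B)"
proof
  interpret A: vector_space "fscale :: 'a \<Rightarrow> ('x \<Rightarrow> 'a) \<Rightarrow> _" by (rule vector_space_fscale)
  interpret K: vector_space "fscale :: 'k \<Rightarrow> ('x \<Rightarrow> 'k) \<Rightarrow> _" by (rule vector_space_fscale)
  interpret P: vector_space_pair "\<lambda>r (k::'k). emb r * k" "(*) :: 'a \<Rightarrow> 'a \<Rightarrow> 'a"
    unfolding vector_space_pair_def using vector_space_restrict_scalars vector_space_mult by blast
  have inj: "inj_on ((\<circ>) emb) B"
    using inj_emb by (auto intro!: inj_onI simp: fun_eq_iff injD)
  assume "K.dependent ((\<circ>) emb ` B)"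
  then obtain u where u: "\<exists>v\<in>(\<circ>) emb ` B. u v \<noteq> 0" "(\<Sum>v\<in>(\<circ>) emb ` B. fscale (u v) v) = 0"
    using K.dependent_finite[OF finite_imageI[OF fin]] by auto
  then obtain w0 where w0: "w0 \<in> B" "u (emb \<circ> w0) \<noteq> 0" by blast
  have rel: "(\<Sum>w\<in>B. fscale (u (emb \<circ> w)) (emb \<circ> w)) = 0"
    using u(2) by (simp add: sum.reindex[OF inj])
  obtain g where g: "Vector_Spaces.linear (\<lambda>r (k::'k). emb r * k) (*) g" "g (u (emb \<circ> w0)) = 1"
    using P.linear_independent_extend[of "{u (emb \<circ> w0)}" "\<lambda>_. 1"]
      P.vs1.dependent_single w0(2) by auto
  interpret G: Vector_Spaces.linear "\<lambda>r (k::'k). emb r * k" "(*) :: 'a \<Rightarrow> 'a \<Rightarrow> 'a" g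
    by (rule g(1))
  have "(\<Sum>w\<in>B. fscale (g (u (emb \<circ> w))) w) = 0"
  proof
    fix x
    have "(\<Sum>w\<in>B. u (emb \<circ> w) * emb (w x)) = 0"
      using fun_cong[OF rel, of x] by (simp add: sum_fun_apply)
    then have "g (\<Sum>w\<in>B. emb (w x) * u (emb \<circ> w)) = 0"
      by (simp add: mult.commute G.zero)
    then show "(\<Sum>w\<in>B. fscale (g (u (emb \<circ> w))) w) x = 0 x"
      by (simp add: G.sum G.scale sum_fun_apply mult.commute)
  qed
  then have "g (u (emb \<circ> w0)) = 0"
    using A.independentD[OF indep fin order_refl, of "\<lambda>w. g (u (emb \<circ> w))"] w0(1) by simp
  with g(2) show False by simp
qed

lemma dim_base_change:
  fixes U :: "('x \<Rightarrow> 'a) set"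
  assumes "finite P" "U \<subseteq> module.span (fscale :: 'a \<Rightarrow> _) P"
  shows "vector_space.dim (fscale :: 'k \<Rightarrow> _) ((\<circ>) emb ` U) = vector_space.dim (fscale :: 'a \<Rightarrow> _) U"
proof -
  interpret A: vector_space "fscale :: 'a \<Rightarrow> ('x \<Rightarrow> 'a) \<Rightarrow> _" by (rule vector_space_fscale)
  interpret K: vector_space "fscale :: 'k \<Rightarrow> ('x \<Rightarrow> 'k) \<Rightarrow> _" by (rule vector_space_fscale)
  obtain B where B: "B \<subseteq> U" "A.independent B" "U \<subseteq> A.span B" "card B = A.dim U"
    using A.basis_exists by blast
  have finB: "finite B"
    using A.independent_span_bound[OF assms(1) B(2)] B(1) assms(2) by blast
  have "(\<circ>) emb ` U \<subseteq> K.span ((\<circ>) emb ` B)"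
  proof
    fix x assume "x \<in> (\<circ>) emb ` U"
    then obtain u where u: "u \<in> U" "x = emb \<circ> u" by blast
    then obtain a where "u = (\<Sum>c\<in>B. fscale (a c) c)"
      using B(3) A.span_finite[OF finB] by blast
    then have "x = (\<Sum>c\<in>B. fscale (emb (a c)) (emb \<circ> c))"
      using u(2) emb_comp_lincomb by simp
    also have "\<dots> \<in> K.span ((\<circ>) emb ` B)"
      by (intro K.span_sum K.span_scale K.span_base) auto
    finally show "x \<in> K.span ((\<circ>) emb ` B)" .
  qed
  then have "K.span ((\<circ>) emb ` B) = K.span ((\<circ>) emb ` U)"
    using B(1) by (metis K.span_mono K.span_span image_mono subset_antisym)
  then have "K.dim ((\<circ>) emb ` U) = card ((\<circ>) emb ` B)"
    using K.dim_eq_card independent_base_change[OF B(2) finB] by metis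
  also have "\<dots> = card B"
    using inj_emb by (intro card_image) (auto intro!: inj_onI simp: fun_eq_iff injD)
  finally show ?thesis using B(4) by simp
qed

end

lemma dmap_add: "dmap E endp nV nE R (w1 + w2) = dmap E endp nV nE R w1 + dmap E endp nV nE R w2"
  by (auto simp: fun_eq_iff dmap_def distrib_left sum.distrib)

lemma dmap_scale: "dmap E endp nV nE R (fscale c w) = fscale c (dmap E endp nV nE R w)"
  by (auto simp: fun_eq_iff dmap_def sum_distrib_left mult.left_commute)

lemma linear_dmap_diff:
  "Vector_Spaces.linear (fscale :: 'k::field \<Rightarrow> _) fscale
     (\<lambda>w. dmap E headG nV nE RH w - dmap E tailG nV nE RT w)"
  by (auto simp: linear_iff vector_space_fscale dmap_add dmap_scale fun_eq_iff algebra_simps)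

lemma dmap_ecomp:
  assumes "finite E" "e \<in> E"
  shows "dmap E endp nV nE R (ecomp e w) (v, i) =
     (if i < nV v \<and> endp e = v then (\<Sum>j<nE e. R e i j * w (e, j)) else 0)"
proof -
  have "(\<Sum>j<nE e'. R e' i j * ecomp e w (e', j)) =
      (if e' = e then (\<Sum>j<nE e. R e i j * w (e, j)) else 0)" for e'
    by (auto simp: ecomp_def)
  then show ?thesis using assms by (simp add: dmap_def)
qed

lemma (in field_embedding) dmap_base_change:
  fixes R :: "'e \<Rightarrow> nat \<Rightarrow> nat \<Rightarrow> 'a" and s :: "'e \<Rightarrow> 'k" and endp :: "'e \<Rightarrow> 'v"
  assumes "finite E"
  shows "dmap E endp nV nE (\<lambda>e i j. s e * emb (R e i j)) (emb \<circ> w)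
    = (\<Sum>e\<in>E. fscale (s e) (emb \<circ> dmap E endp nV nE R (ecomp e w)))"
proof
  fix x :: "'v \<times> nat"
  obtain v i where x: "x = (v, i)" by force
  have "(\<Sum>e\<in>E. fscale (s e) (emb \<circ> dmap E endp nV nE R (ecomp e w))) (v, i)
      = (\<Sum>e\<in>E. s e * emb (if i < nV v \<and> endp e = v then (\<Sum>j<nE e. R e i j * w (e, j)) else 0))"
    using assms by (simp add: sum_fun_apply dmap_ecomp)
  also have "\<dots> = dmap E endp nV nE (\<lambda>e i j. s e * emb (R e i j)) (emb \<circ> w) (v, i)"
    using assms by (simp add: dmap_def emb_sum emb_mult sum_distrib_left mult.assoc
        sum.inter_filter if_distrib cong: if_cong)
  finally show "dmap E endp nV nE (\<lambda>e i j. s e * emb (R e i j)) (emb \<circ> w) x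
      = (\<Sum>e\<in>E. fscale (s e) (emb \<circ> dmap E endp nV nE R (ecomp e w))) x"
    unfolding x by simp
qed

interpretation const_psi: field_embedding "const_psi :: 'a::field \<Rightarrow> ('e::linorder, 'a) psi_field"
  by unfold_locales (simp_all add: const_psi_def single_add mult_single One_fract_def)

definition twisted_diff :: "'e::linorder set \<Rightarrow> ('e \<Rightarrow> 'v) \<Rightarrow> ('e \<Rightarrow> 'v) \<Rightarrow> ('v \<Rightarrow> nat)
    \<Rightarrow> ('e \<Rightarrow> nat) \<Rightarrow> ('e \<Rightarrow> nat \<Rightarrow> nat \<Rightarrow> 'a::field) \<Rightarrow> ('e \<Rightarrow> nat \<Rightarrow> nat \<Rightarrow> 'a)
    \<Rightarrow> ('e \<times> nat \<Rightarrow> ('e, 'a) psi_field) \<Rightarrow> ('v \<times> nat \<Rightarrow> ('e, 'a) psi_field)" where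
  "twisted_diff E tailG headG nV nE RT RH w =
     dmap E headG nV nE (\<lambda>e i j. const_psi (RH e i j)) w
     - dmap E tailG nV nE (\<lambda>e i j. psi e * const_psi (RT e i j)) w"

lemma linear_twisted_diff:
  "Vector_Spaces.linear fscale fscale (twisted_diff E tailG headG nV nE RT RH)"
  unfolding twisted_diff_def[abs_def] by (rule linear_dmap_diff)

lemma h1_twist_eq_dim_kernel:
  "h1_twist V E tailG headG nV nE RT RH = vector_space.dim fscale
     {w \<in> FE E nE. twisted_diff E tailG headG nV nE RT RH w = 0}"
  by (simp add: h1_twist_def H1_def twisted_diff_def)

lemma twisted_diff_Gamma_ht:
  fixes RT RH :: "'e::linorder \<Rightarrow> nat \<Rightarrow> nat \<Rightarrow> 'a::field"
  assumes "finite E" and b: "b \<in> Gamma_ht V E tailG headG nV nE RT RH U"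
  shows "twisted_diff E tailG headG nV nE RT RH (const_psi \<circ> b)
     \<in> module.span fscale ((\<circ>) const_psi ` U)"
proof -
  interpret K: vector_space "fscale :: ('e, 'a) psi_field \<Rightarrow> ('v \<times> nat \<Rightarrow> _) \<Rightarrow> _"
    by (rule vector_space_fscale)
  have bU: "dmap E headG nV nE RH (ecomp e b) \<in> U" "dmap E tailG nV nE RT (ecomp e b) \<in> U"
    if "e \<in> E" for e
    using b that by (auto simp: Gamma_ht_def)
  have h: "dmap E headG nV nE (\<lambda>e i j. const_psi (RH e i j)) (const_psi \<circ> b)
      = (\<Sum>e\<in>E. fscale 1 (const_psi \<circ> dmap E headG nV nE RH (ecomp e b)))"
    using const_psi.dmap_base_change[OF assms(1), of headG nV nE "\<lambda>_. 1" RH b] by simp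
  have t: "dmap E tailG nV nE (\<lambda>e i j. psi e * const_psi (RT e i j)) (const_psi \<circ> b)
      = (\<Sum>e\<in>E. fscale (psi e) (const_psi \<circ> dmap E tailG nV nE RT (ecomp e b)))"
    by (rule const_psi.dmap_base_change[OF assms(1)])
  show ?thesis
    unfolding twisted_diff_def h t using bU
    by (intro K.span_diff K.span_sum K.span_scale K.span_base) auto
qed

lemma dim_Gamma_ht_le:
  fixes RT RH :: "'e::linorder \<Rightarrow> nat \<Rightarrow> nat \<Rightarrow> 'a::field" and U :: "('v \<times> nat \<Rightarrow> 'a) set"
  assumes finV: "finite V" and finE: "finite E" and U: "U \<subseteq> FV V nV"
  shows "vector_space.dim (fscale :: 'a \<Rightarrow> _) (Gamma_ht V E tailG headG nV nE RT RH U)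
     \<le> h1_twist V E tailG headG nV nE RT RH + vector_space.dim (fscale :: 'a \<Rightarrow> _) U"
proof -
  interpret K: vector_space "fscale :: ('e, 'a) psi_field \<Rightarrow> ('e \<times> nat \<Rightarrow> _) \<Rightarrow> _"
    by (rule vector_space_fscale)
  interpret KV: vector_space "fscale :: ('e, 'a) psi_field \<Rightarrow> ('v \<times> nat \<Rightarrow> _) \<Rightarrow> _"
    by (rule vector_space_fscale)
  interpret KP: vector_space_pair "fscale :: ('e, 'a) psi_field \<Rightarrow> ('e \<times> nat \<Rightarrow> _) \<Rightarrow> _"
    "fscale :: ('e, 'a) psi_field \<Rightarrow> ('v \<times> nat \<Rightarrow> _) \<Rightarrow> _" ..
  define \<Gamma> where "\<Gamma> = Gamma_ht V E tailG headG nV nE RT RH U"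
  define D where "D = twisted_diff E tailG headG nV nE RT RH"
  define H where "H = {w \<in> FE E nE. D w = 0}"
  define W where "W = K.span ((\<circ>) const_psi ` \<Gamma>)"
  obtain PE :: "('e \<times> nat \<Rightarrow> 'a) set" where PE: "finite PE" "FE E nE \<subseteq> module.span fscale PE"
    using FE_finite_dim[OF finE] by blast
  obtain QE where QE: "finite QE" "FE E nE \<subseteq> K.span QE"
    using FE_finite_dim[OF finE] by blast
  obtain PV :: "('v \<times> nat \<Rightarrow> 'a) set" where PV: "finite PV" "FV V nV \<subseteq> module.span fscale PV"
    using FV_finite_dim[OF finV] by blast
  obtain QV where QV: "finite QV" "FV V nV \<subseteq> KV.span QV"
    using FV_finite_dim[OF finV] by blast
  have linD: "Vector_Spaces.linear fscale fscale D"
    unfolding D_def by (rule linear_twisted_diff)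
  have \<Gamma>_FE: "\<Gamma> \<subseteq> FE E nE"
    by (auto simp: \<Gamma>_def Gamma_ht_def)
  have W_FE: "W \<subseteq> FE E nE"
    unfolding W_def using \<Gamma>_FE
    by (intro K.span_minimal) (auto simp: FE_def K.subspace_def)
  have lift_U: "(\<circ>) const_psi ` U \<subseteq> FV V nV"
    using U by (auto simp: FV_def)
  have "D ` W = KV.span (D ` (\<circ>) const_psi ` \<Gamma>)"
    unfolding W_def by (rule KP.linear_span_image[OF linD, symmetric])
  also have "\<dots> \<subseteq> KV.span ((\<circ>) const_psi ` U)"
    using twisted_diff_Gamma_ht[OF finE] unfolding \<Gamma>_def D_def
    by (intro KV.span_minimal) auto
  finally have DW: "D ` W \<subseteq> KV.span ((\<circ>) const_psi ` U)" .
  have dim_W: "vector_space.dim fscale \<Gamma> = K.dim W"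
    unfolding W_def K.dim_span
    by (rule const_psi.dim_base_change[OF PE(1) order_trans[OF \<Gamma>_FE PE(2)], symmetric])
  have rank_nullity: "K.dim W \<le> K.dim {x\<in>W. D x = 0} + KV.dim (D ` W)"
    by (rule KP.dim_le_kernel_plus_image[OF linD _ QE(1) order_trans[OF W_FE QE(2)]])
      (simp add: W_def)
  have dim_kernel: "K.dim {x\<in>W. D x = 0} \<le> K.dim H"
  proof -
    have "{x\<in>W. D x = 0} \<subseteq> H" "H \<subseteq> K.span QE"
      using W_FE QE(2) by (auto simp: H_def)
    then show ?thesis
      using K.dim_mono_finite_dim[OF QE(1)] K.span_superset by blast
  qed
  have "KV.dim (D ` W) \<le> KV.dim ((\<circ>) const_psi ` U)"
    by (rule KV.dim_mono_finite_dim[OF QV(1) order_trans[OF lift_U QV(2)] DW])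
  also have "\<dots> = vector_space.dim fscale U"
    by (rule const_psi.dim_base_change[OF PV(1) order_trans[OF U PV(2)]])
  finally have dim_image: "KV.dim (D ` W) \<le> vector_space.dim fscale U" .
  have "K.dim H = h1_twist V E tailG headG nV nE RT RH"
    unfolding H_def D_def h1_twist_eq_dim_kernel ..
  then show ?thesis
    using dim_W rank_nullity dim_kernel dim_image unfolding \<Gamma>_def by linarith
qed

lemma excess_le_h1_twist:
  fixes RT RH :: "'e::linorder \<Rightarrow> nat \<Rightarrow> nat \<Rightarrow> 'a::field"
  assumes "finite V" "finite E" "U \<subseteq> FV V nV"
  shows "excess V E tailG headG nV nE RT RH U \<le> int (h1_twist V E tailG headG nV nE RT RH)"
proof -
  have "vector_space.dim (fscale :: 'a \<Rightarrow> _) (Gamma_ht V E tailG headG nV nE RT RH U)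
     \<le> h1_twist V E tailG headG nV nE RT RH + vector_space.dim (fscale :: 'a \<Rightarrow> _) U"
    by (rule dim_Gamma_ht_le[OF assms])
  then show ?thesis
    unfolding excess_def by linarith
qed

lemma excess_ge_minus_dim_FV:
  fixes V :: "'v set" and RT RH :: "'e \<Rightarrow> nat \<Rightarrow> nat \<Rightarrow> 'a::field"
  assumes "finite V" "U \<subseteq> FV V nV"
  shows "- int (vector_space.dim (fscale :: 'a \<Rightarrow> _) (FV V nV))
     \<le> excess V E tailG headG nV nE RT RH U"
proof -
  obtain P :: "('v \<times> nat \<Rightarrow> 'a) set" where P: "finite P" "FV V nV \<subseteq> module.span fscale P"
    using FV_finite_dim[OF assms(1)] by blast
  interpret A: vector_space "fscale :: 'a \<Rightarrow> ('v \<times> nat \<Rightarrow> 'a) \<Rightarrow> _"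
    by (rule vector_space_fscale)
  have "A.dim U \<le> A.dim (FV V nV)"
    by (rule A.dim_mono_finite_dim[OF P order_trans[OF assms(2) A.span_superset]])
  then show ?thesis
    unfolding excess_def by linarith
qed

theorem lemma1:
  fixes V :: "'v set" and E :: "'e::linorder set" and tailG headG :: "'e \<Rightarrow> 'v"
    and nV :: "'v \<Rightarrow> nat" and nE :: "'e \<Rightarrow> nat"
    and RT RH :: "'e \<Rightarrow> nat \<Rightarrow> nat \<Rightarrow> 'a::field"
  assumes "finite V" and "finite E"
    and "\<forall>e\<in>E. tailG e \<in> V \<and> headG e \<in> V"
  shows "int (h1_twist V E tailG headG nV nE RT RH) \<ge> max_excess V E tailG headG nV nE RT RH"
proof -
  define h where "h = int (h1_twist V E tailG headG nV nE RT RH)"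
  define N where "N = vector_space.dim (fscale :: 'a \<Rightarrow> _) (FV V nV)"
  define S where "S = {excess V E tailG headG nV nE RT RH U | U.
            module.subspace (fscale :: 'a \<Rightarrow> _) U \<and> U \<subseteq> FV V nV}"
  have bounds: "s \<in> {- int N..h}" if s_S: "s \<in> S" for s
  proof -
    obtain U where U: "U \<subseteq> FV V nV" and s: "s = excess V E tailG headG nV nE RT RH U"
      using s_S unfolding S_def by blast
    show ?thesis
      unfolding h_def N_def s atLeastAtMost_iff
      using excess_ge_minus_dim_FV[OF assms(1) U] excess_le_h1_twist[OF assms(1,2) U] by (intro conjI)
  qed
  then have "finite S"
    by (intro finite_subset[OF _ finite_atLeastAtMost_int[of "- int N" h]]) auto
  moreover have "excess V E tailG headG nV nE RT RH {0} \<in> S"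
  proof -
    interpret A: vector_space "fscale :: 'a \<Rightarrow> ('v \<times> nat \<Rightarrow> 'a) \<Rightarrow> _"
      by (rule vector_space_fscale)
    have "{0} \<subseteq> FV V nV"
      by (auto simp: FV_def)
    then show ?thesis
      unfolding S_def using A.subspace_single_0 by blast
  qed
  ultimately have "Max S \<le> h"
    using bounds by (intro Max.boundedI) auto
  then show ?thesis
    unfolding max_excess_def S_def h_def .
qed

end
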